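(* Every maximal non-PCG is a $2$-AND-PCG.
   Context: All trees are unrooted with edges weighted by nonnegative reals; $d_T(u,v)$ is the weight of the path between leaves $u,v$ of $T$. A graph $H$ is a PCG if there exist a tree $T$ with leaf set $V(H)$ and an interval $I$ of nonnegative reals such that $\{u,v\}\in E(H)$ iff $d_T(u,v)\in I$. A graph $G$ is a maximal non-PCG if $G$ is not a PCG but adding any single edge (between two non-adjacent vertices of $G$) yields a PCG. A graph $G=(V,E)$ is a $k$-AND-PCG if there exist $k$ PCGs $G_1,\ldots,G_k$ on vertex set $V$ with $E=\bigcap_i E(G_i)$. *)

theory Defs
  imports Complex_Main
begin

definition simple_graph :: "'a set \<Rightarrow> 'a set set \<Rightarrow> bool" where
  "simple_graph V E \<longleftrightarrow> finite V \<and>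
     (\<forall>e\<in>E. \<exists>u v. u \<in> V \<and> v \<in> V \<and> u \<noteq> v \<and> e = {u, v})"

definition tpath :: "'b set set \<Rightarrow> 'b list \<Rightarrow> bool" where
  "tpath TE xs \<longleftrightarrow> xs \<noteq> [] \<and> distinct xs \<and>
     (\<forall>i. Suc i < length xs \<longrightarrow> {xs ! i, xs ! Suc i} \<in> TE)"

definition is_tree :: "'b set \<Rightarrow> 'b set set \<Rightarrow> bool" where
  "is_tree N TE \<longleftrightarrow> simple_graph N TE \<and>
     (\<forall>u\<in>N. \<forall>v\<in>N. \<exists>!xs. tpath TE xs \<and> hd xs = u \<and> last xs = v)"

(* leaves: nodes of degree at most 1 (degree 0 only for the one-node tree) *)
definition tree_leaves :: "'b set \<Rightarrow> 'b set set \<Rightarrow> 'b set" where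
  "tree_leaves N TE = {x \<in> N. card {e \<in> TE. x \<in> e} \<le> 1}"

definition path_weight :: "('b set \<Rightarrow> real) \<Rightarrow> 'b list \<Rightarrow> real" where
  "path_weight w xs = (\<Sum>i < length xs - 1. w {xs ! i, xs ! Suc i})"

definition tree_dist :: "'b set set \<Rightarrow> ('b set \<Rightarrow> real) \<Rightarrow> 'b \<Rightarrow> 'b \<Rightarrow> real" where
  "tree_dist TE w u v = path_weight w (THE xs. tpath TE xs \<and> hd xs = u \<and> last xs = v)"

definition nonneg_interval :: "real set \<Rightarrow> bool" where
  "nonneg_interval I \<longleftrightarrow> I \<subseteq> {0..} \<and>
     (\<forall>x\<in>I. \<forall>z\<in>I. \<forall>y. x \<le> y \<and> y \<le> z \<longrightarrow> y \<in> I)"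

(* Pairwise compatibility graph. Tree nodes are of type 'a + nat: the leaves are
   exactly the (tagged) graph vertices Inl ` V, internal nodes are Inr n. *)
definition pcg :: "'a set \<Rightarrow> 'a set set \<Rightarrow> bool" where
  "pcg V E \<longleftrightarrow> simple_graph V E \<and>
     (\<exists>(N :: ('a + nat) set) TE w I.
        is_tree N TE \<and> (\<forall>e\<in>TE. w e \<ge> 0) \<and> tree_leaves N TE = Inl ` V \<and>
        nonneg_interval I \<and>
        (\<forall>u\<in>V. \<forall>v\<in>V. u \<noteq> v \<longrightarrow>
            ({u, v} \<in> E \<longleftrightarrow> tree_dist TE w (Inl u) (Inl v) \<in> I)))"

definition max_non_pcg :: "'a set \<Rightarrow> 'a set set \<Rightarrow> bool" where
  "max_non_pcg V E \<longleftrightarrow> simple_graph V E \<and> \<not> pcg V E \<and>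
     (\<forall>u\<in>V. \<forall>v\<in>V. u \<noteq> v \<longrightarrow> {u, v} \<notin> E \<longrightarrow> pcg V (insert {u, v} E))"

definition k_and_pcg :: "nat \<Rightarrow> 'a set \<Rightarrow> 'a set set \<Rightarrow> bool" where
  "k_and_pcg k V E \<longleftrightarrow> simple_graph V E \<and>
     (\<exists>Es :: nat \<Rightarrow> 'a set set. (\<forall>i<k. pcg V (Es i)) \<and> E = (\<Inter>i<k. Es i))"

end

theory Submission imports Defs begin

(* A maximal non-PCG misses some edge uv, because complete graphs are PCGs. It is the
   intersection of the PCG obtained by adding uv with the complete graph minus uv, and the
   latter is a PCG: on a star whose leaf edges at u and v have weight 1 and all others
   weight 0, only u and v are at distance 2, so the interval [0, 1] selects all other pairs. *)

definition star_nodes :: "'a set \<Rightarrow> ('a + nat) set" where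
  "star_nodes V = insert (Inr 0) (Inl ` V)"

definition star_edges :: "'a set \<Rightarrow> ('a + nat) set set" where
  "star_edges V = (\<lambda>x. {Inl x, Inr 0}) ` V"

definition star_path :: "('a + nat) \<Rightarrow> ('a + nat) \<Rightarrow> ('a + nat) list" where
  "star_path a b =
     (if a = b then [a] else if a = Inr 0 \<or> b = Inr 0 then [a, b] else [a, Inr 0, b])"

lemma hd_star_path [simp]: "hd (star_path a b) = a"
  and last_star_path [simp]: "last (star_path a b) = b"
  by (simp_all add: star_path_def)

lemma star_edge_centre: "e \<in> star_edges V \<Longrightarrow> Inr 0 \<in> e"
  by (auto simp: star_edges_def)

text \<open>Every edge of the star contains the centre, which a simple path visits only once.\<close>

lemma tpath_star_length:
  assumes "tpath (star_edges V) xs"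
  shows "length xs \<le> 3"
proof (rule ccontr)
  assume "\<not> length xs \<le> 3"
  then obtain a b c d ys where xs: "xs = a # b # c # d # ys"
    by (auto simp: numeral_eq_Suc not_le Suc_less_eq2 length_Suc_conv neq_Nil_conv)
  have "{a, b} \<in> star_edges V" "{c, d} \<in> star_edges V"
    using assms unfolding tpath_def xs
    by (metis length_Cons nth_Cons_0 nth_Cons_Suc Suc_less_eq zero_less_Suc)+
  then have "Inr 0 \<in> {a, b}" "Inr 0 \<in> {c, d}"
    by (simp_all only: star_edge_centre)
  moreover have "distinct xs" using assms by (simp add: tpath_def)
  ultimately show False using xs by auto
qed

lemma tpath_star_eq_star_path:
  assumes "tpath (star_edges V) xs"
  shows "xs = star_path (hd xs) (last xs)"
proof -
  have "xs \<noteq> []" "distinct xs"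
    and edge: "\<And>i. Suc i < length xs \<Longrightarrow> Inr 0 \<in> {xs ! i, xs ! Suc i}"
    using assms star_edge_centre by (auto simp: tpath_def)
  moreover have "length xs \<le> 3" using tpath_star_length[OF assms] .
  ultimately consider a where "xs = [a]" | a b where "xs = [a, b]" | a b c where "xs = [a, b, c]"
    by (cases xs rule: remdups_adj.cases; cases "tl (tl xs)") auto
  then show ?thesis
  proof cases
    case 1
    then show ?thesis by (simp add: star_path_def)
  next
    case (2 a b)
    then show ?thesis
      using edge[of 0] \<open>distinct xs\<close> by (auto simp: star_path_def)
  next
    case (3 a b c)
    then have "Inr 0 \<in> {a, b}" "Inr 0 \<in> {b, c}"
      using edge[of 0] edge[of 1] by auto
    then have "b = Inr 0" "a \<noteq> Inr 0" "c \<noteq> Inr 0" "a \<noteq> c"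
      using 3 \<open>distinct xs\<close> by auto
    then show ?thesis
      using 3 by (simp add: star_path_def)
  qed
qed

lemma tpath_star_path:
  assumes "a \<in> star_nodes V" "b \<in> star_nodes V"
  shows "tpath (star_edges V) (star_path a b)"
  using assms unfolding tpath_def star_path_def star_nodes_def star_edges_def
  by (auto simp: less_Suc_eq nth_Cons' insert_commute)

lemma star_unique_path:
  assumes "a \<in> star_nodes V" "b \<in> star_nodes V"
  shows "\<exists>!xs. tpath (star_edges V) xs \<and> hd xs = a \<and> last xs = b"
proof (rule ex1I)
  show "tpath (star_edges V) (star_path a b) \<and> hd (star_path a b) = a \<and> last (star_path a b) = b"
    using tpath_star_path[OF assms] by simp
qed (metis tpath_star_eq_star_path)

lemma is_tree_star:
  assumes "finite V"
  shows "is_tree (star_nodes V) (star_edges V)"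
proof -
  have "simple_graph (star_nodes V) (star_edges V)"
    using assms by (auto simp: simple_graph_def star_nodes_def star_edges_def)
  then show ?thesis
    unfolding is_tree_def using star_unique_path by blast
qed

lemma tree_leaves_star:
  assumes "finite V" "2 \<le> card V"
  shows "tree_leaves (star_nodes V) (star_edges V) = Inl ` V"
proof -
  have "{e \<in> star_edges V. Inl x \<in> e} = {{Inl x, Inr 0}}" if "x \<in> V" for x
    using that by (auto simp: star_edges_def)
  moreover have "card {e \<in> star_edges V. Inr 0 \<in> e} = card V"
  proof -
    have "{e \<in> star_edges V. Inr 0 \<in> e} = (\<lambda>x. {Inl x, Inr 0}) ` V"
      by (auto simp: star_edges_def)
    moreover have "inj_on (\<lambda>x. {Inl x, Inr 0 :: 'a + nat}) V"
      by (auto intro: inj_onI simp: doubleton_eq_iff)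
    ultimately show ?thesis by (simp add: card_image)
  qed
  ultimately show ?thesis
    using assms(2) by (auto simp: tree_leaves_def star_nodes_def)
qed

lemma tree_dist_star:
  assumes "x \<in> V" "y \<in> V" "x \<noteq> y"
  shows "tree_dist (star_edges V) w (Inl x) (Inl y) = w {Inl x, Inr 0} + w {Inr 0, Inl y}"
proof -
  have nodes: "Inl x \<in> star_nodes V" "Inl y \<in> star_nodes V"
    using assms by (auto simp: star_nodes_def)
  then have "(THE xs. tpath (star_edges V) xs \<and> hd xs = Inl x \<and> last xs = Inl y)
      = star_path (Inl x) (Inl y)"
    using tpath_star_path[OF nodes] by (intro the1_equality star_unique_path) auto
  then show ?thesis
    using assms by (simp add: tree_dist_def star_path_def path_weight_def numeral_eq_Suc)
qed

text \<open>Realised by the star whose leaf edge at \<open>x\<close> has weight \<open>f x\<close>.\<close>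

lemma pcg_of_vertex_weights:
  assumes "simple_graph V E" "2 \<le> card V" "\<forall>x\<in>V. f x \<ge> 0" "nonneg_interval I"
    and "\<And>x y. x \<in> V \<Longrightarrow> y \<in> V \<Longrightarrow> x \<noteq> y \<Longrightarrow> {x, y} \<in> E \<longleftrightarrow> f x + f y \<in> I"
  shows "pcg V E"
proof -
  have "finite V" using assms(1) by (simp add: simple_graph_def)
  define w where "w e = (\<Sum>x\<in>{x\<in>V. Inl x \<in> e}. f x)" for e :: "('a + nat) set"
  have w_leaf: "w {Inl x, Inr 0} = f x" "w {Inr 0, Inl x} = f x" if "x \<in> V" for x
  proof -
    have "{z \<in> V. Inl z \<in> {Inl x, Inr (0::nat)}} = {x}" using that by auto
    then show "w {Inl x, Inr 0} = f x" "w {Inr 0, Inl x} = f x"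
      by (simp_all add: w_def insert_commute)
  qed
  have "\<forall>e\<in>star_edges V. w e \<ge> 0"
    using assms(3) by (auto simp: w_def intro: sum_nonneg)
  moreover have "\<forall>x\<in>V. \<forall>y\<in>V. x \<noteq> y \<longrightarrow>
      ({x, y} \<in> E \<longleftrightarrow> tree_dist (star_edges V) w (Inl x) (Inl y) \<in> I)"
    using assms(5) by (simp add: tree_dist_star w_leaf)
  ultimately show ?thesis
    unfolding pcg_def
    using assms(1,2,4) is_tree_star[OF \<open>finite V\<close>] tree_leaves_star[OF \<open>finite V\<close>]
    by (intro conjI exI[of _ "star_nodes V"] exI[of _ "star_edges V"] exI[of _ w] exI[of _ I])
      simp_all
qed

lemma tpath_empty_iff: "tpath {} xs \<longleftrightarrow> (\<exists>a. xs = [a])"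
  unfolding tpath_def by (cases xs; cases "tl xs") auto

lemma pcg_subsingleton:
  assumes "simple_graph V E" "\<forall>x\<in>V. \<forall>y\<in>V. x = y"
  shows "pcg V E"
proof -
  have "finite V" using assms(1) by (simp add: simple_graph_def)
  then have "is_tree (Inl ` V :: ('a + nat) set) {}"
    using assms(2) by (auto simp: is_tree_def simple_graph_def tpath_empty_iff)
  moreover have "tree_leaves (Inl ` V :: ('a + nat) set) {} = Inl ` V"
    by (simp add: tree_leaves_def)
  moreover have "nonneg_interval {}" by (simp add: nonneg_interval_def)
  ultimately show ?thesis
    unfolding pcg_def using assms
    by (intro conjI exI[of _ "Inl ` V"] exI[of _ "{}"] exI[of _ "\<lambda>_. 0"] exI[of _ "{}"]) auto
qed

definition complete_graph :: "'a set \<Rightarrow> 'a set set" where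
  "complete_graph V = {{x, y} | x y. x \<in> V \<and> y \<in> V \<and> x \<noteq> y}"

lemma simple_graph_subset_complete_graph: "simple_graph V E \<Longrightarrow> E \<subseteq> complete_graph V"
  unfolding simple_graph_def complete_graph_def by blast

lemma simple_graph_Diff: "simple_graph V E \<Longrightarrow> simple_graph V (E - F)"
  by (simp add: simple_graph_def)

lemma simple_graph_complete_graph: "finite V \<Longrightarrow> simple_graph V (complete_graph V)"
  by (auto simp: simple_graph_def complete_graph_def)

lemma pcg_complete_graph:
  assumes "finite V"
  shows "pcg V (complete_graph V)"
proof (cases "2 \<le> card V")
  case True
  show ?thesis
  proof (rule pcg_of_vertex_weights[where f = "\<lambda>_. 0" and I = "{0..}"])
    show "nonneg_interval {0::real..}" by (simp add: nonneg_interval_def)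
  qed (use assms True simple_graph_complete_graph in \<open>auto simp: complete_graph_def\<close>)
next
  case False
  then have "\<forall>x\<in>V. \<forall>y\<in>V. x = y"
    using assms card_le_Suc0_iff_eq by fastforce
  with assms show ?thesis
    by (intro pcg_subsingleton simple_graph_complete_graph)
qed

lemma pcg_complete_graph_minus_edge:
  assumes "finite V" "u \<in> V" "v \<in> V" "u \<noteq> v"
  shows "pcg V (complete_graph V - {{u, v}})"
proof (rule pcg_of_vertex_weights[where f = "\<lambda>x. if x = u \<or> x = v then 1 else 0" and I = "{0..1}"])
  show "simple_graph V (complete_graph V - {{u, v}})"
    using assms(1) by (intro simple_graph_Diff simple_graph_complete_graph)
  have "card {u, v} \<le> card V" using assms by (intro card_mono) auto
  then show "2 \<le> card V" using assms(4) by simp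
  show "nonneg_interval {0::real..1}" by (auto simp: nonneg_interval_def)
qed (use assms in \<open>auto simp: complete_graph_def doubleton_eq_iff\<close>)

lemma k_and_pcg_2I:
  assumes "simple_graph V E" "pcg V A" "pcg V B" "E = A \<inter> B"
  shows "k_and_pcg 2 V E"
  unfolding k_and_pcg_def
  using assms by (intro conjI exI[of _ "\<lambda>i. if i = 0 then A else B"]) (auto simp: lessThan_nat_numeral)

theorem theorem11:
  fixes V :: "'a set" and E :: "'a set set"
  assumes "max_non_pcg V E"
  shows "k_and_pcg 2 V E"
proof -
  have graph: "simple_graph V E" and "\<not> pcg V E"
    and maximal: "\<And>u v. u \<in> V \<Longrightarrow> v \<in> V \<Longrightarrow> u \<noteq> v \<Longrightarrow> {u, v} \<notin> E \<Longrightarrow>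
                           pcg V (insert {u, v} E)"
    using assms by (auto simp: max_non_pcg_def)
  have "finite V" using graph by (simp add: simple_graph_def)
  have "E \<noteq> complete_graph V"
    using \<open>\<not> pcg V E\<close> pcg_complete_graph[OF \<open>finite V\<close>] by auto
  then obtain u v where uv: "u \<in> V" "v \<in> V" "u \<noteq> v" "{u, v} \<notin> E"
    using simple_graph_subset_complete_graph[OF graph] by (auto simp: complete_graph_def)
  have "E = insert {u, v} E \<inter> (complete_graph V - {{u, v}})"
    using simple_graph_subset_complete_graph[OF graph] uv(4) by blast
  with graph maximal[OF uv] pcg_complete_graph_minus_edge[OF \<open>finite V\<close> uv(1-3)]
  show ?thesis by (rule k_and_pcg_2I)
qed

end
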